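(* Let $r\ge 3$ and let $\mathcal H=(V,E)$ be an $r$-uniform bi-hypergraph. Suppose $V$ has a partition $V_1,\dots,V_k$ such that each $V_i$ is an independent set of $\mathcal H$, and for each edge $e\in E$ there are indices $i_1,\dots,i_q\in[k]$ with $q<r$ and $e\subseteq V_{i_1}\cup\dots\cup V_{i_q}$. Then $\mathcal H$ is colorable.
   Context: A bi-hypergraph $\mathcal H=(V,E)$ consists of a finite vertex set $V$ and a set $E$ of subsets of $V$, called edges, with no edge contained in another. It is $r$-uniform if every edge has exactly $r$ elements. A set $S\subseteq V$ is independent if no edge of $\mathcal H$ is contained in $S$. A mapping $f:V\to\mathbb N$ is a proper coloring of $\mathcal H$ if $1<|f(e)|<|e|$ for every $e\in E$, where $f(e)=\{f(v):v\in e\}$. $\mathcal H$ is colorable if it has a proper coloring. $[k]=\{1,\dots,k\}$. *)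

theory Defs
  imports Main
begin

definition bi_hypergraph :: "'a set \<Rightarrow> 'a set set \<Rightarrow> bool" where
  "bi_hypergraph V E \<longleftrightarrow> finite V \<and> (\<forall>e\<in>E. e \<subseteq> V) \<and>
     (\<forall>e\<in>E. \<forall>e'\<in>E. e \<subseteq> e' \<longrightarrow> e = e')"

definition uniform :: "nat \<Rightarrow> 'a set set \<Rightarrow> bool" where
  "uniform r E \<longleftrightarrow> (\<forall>e\<in>E. card e = r)"

definition independent :: "'a set set \<Rightarrow> 'a set \<Rightarrow> bool" where
  "independent E S \<longleftrightarrow> (\<forall>e\<in>E. \<not> e \<subseteq> S)"

definition proper_coloring :: "'a set \<Rightarrow> 'a set set \<Rightarrow> ('a \<Rightarrow> nat) \<Rightarrow> bool" where
  "proper_coloring V E f \<longleftrightarrow> (\<forall>e\<in>E. 1 < card (f ` e) \<and> card (f ` e) < card e)"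

definition colorable :: "'a set \<Rightarrow> 'a set set \<Rightarrow> bool" where
  "colorable V E \<longleftrightarrow> (\<exists>f. proper_coloring V E f)"

end

theory Submission
  imports Defs
begin

text \<open>Colour every vertex by the index of the part containing it. Since parts are independent,
  no edge lies in a single part, so it receives at least two colours; since every edge of size
  \<open>r\<close> meets fewer than \<open>r\<close> parts, it receives fewer than \<open>r\<close> colours.\<close>

definition part_index :: "nat set \<Rightarrow> (nat \<Rightarrow> 'a set) \<Rightarrow> 'a \<Rightarrow> nat" where
  "part_index K P v = (SOME i. i \<in> K \<and> v \<in> P i)"

lemma part_index_eq:
  assumes disjoint: "\<forall>i\<in>K. \<forall>j\<in>K. i \<noteq> j \<longrightarrow> P i \<inter> P j = {}"
    and "j \<in> K" "v \<in> P j"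
  shows "part_index K P v = j"
proof -
  have "\<exists>i. i \<in> K \<and> v \<in> P i" using assms(2,3) by blast
  then have "part_index K P v \<in> K \<and> v \<in> P (part_index K P v)"
    unfolding part_index_def by (rule someI_ex)
  then show ?thesis using disjoint assms(2,3) by blast
qed

lemma part_index_image_subset:
  assumes "\<forall>i\<in>K. \<forall>j\<in>K. i \<noteq> j \<longrightarrow> P i \<inter> P j = {}"
    and "I \<subseteq> K" "e \<subseteq> (\<Union>i\<in>I. P i)"
  shows "part_index K P ` e \<subseteq> I"
proof
  fix c assume "c \<in> part_index K P ` e"
  then obtain v where "v \<in> e" "c = part_index K P v" by blast
  moreover obtain i where "i \<in> I" "v \<in> P i" using \<open>v \<in> e\<close> assms(3) by blast
  ultimately show "c \<in> I" using part_index_eq[OF assms(1)] assms(2) by blast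
qed

lemma part_index_image_singleton:
  assumes "\<forall>i\<in>K. \<forall>j\<in>K. i \<noteq> j \<longrightarrow> P i \<inter> P j = {}"
    and "e \<subseteq> (\<Union>i\<in>K. P i)" "part_index K P ` e = {j}"
  shows "e \<subseteq> P j"
proof
  fix v assume "v \<in> e"
  then obtain i where "i \<in> K" "v \<in> P i" using assms(2) by blast
  moreover have "part_index K P v = j" using \<open>v \<in> e\<close> assms(3) by blast
  ultimately show "v \<in> P j" using part_index_eq[OF assms(1)] by blast
qed

lemma proper_coloring_part_index:
  assumes disjoint: "\<forall>i\<in>K. \<forall>j\<in>K. i \<noteq> j \<longrightarrow> P i \<inter> P j = {}"
    and "finite K"
    and indep: "\<forall>i\<in>K. independent E (P i)"
    and few_parts: "\<forall>e\<in>E. e \<noteq> {} \<and> (\<exists>I \<subseteq> K. card I < card e \<and> e \<subseteq> (\<Union>i\<in>I. P i))"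
  shows "proper_coloring V E (part_index K P)"
  unfolding proper_coloring_def
proof
  fix e assume "e \<in> E"
  then have "e \<noteq> {}" and "\<exists>I \<subseteq> K. card I < card e \<and> e \<subseteq> (\<Union>i\<in>I. P i)"
    using few_parts by auto
  then obtain I where I: "I \<subseteq> K" "card I < card e" "e \<subseteq> (\<Union>i\<in>I. P i)"
    by blast
  have colours_in_I: "part_index K P ` e \<subseteq> I"
    using part_index_image_subset[OF disjoint I(1,3)] .
  have "finite I" using \<open>finite K\<close> I(1) by (rule finite_subset[rotated])
  then have "finite (part_index K P ` e)" using colours_in_I by (rule finite_subset[rotated])
  have "card (part_index K P ` e) < card e"
    using card_mono[OF \<open>finite I\<close> colours_in_I] I(2) by simp
  moreover have "card (part_index K P ` e) \<noteq> 1"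
  proof
    assume "card (part_index K P ` e) = 1"
    then obtain j where j: "part_index K P ` e = {j}" by (rule card_1_singletonE)
    then have "j \<in> K" using colours_in_I I(1) by blast
    have "e \<subseteq> (\<Union>i\<in>K. P i)" using I(1,3) by blast
    then have "e \<subseteq> P j" using part_index_image_singleton[OF disjoint _ j] by blast
    then show False using indep \<open>j \<in> K\<close> \<open>e \<in> E\<close> unfolding independent_def by blast
  qed
  moreover have "card (part_index K P ` e) \<noteq> 0"
    using \<open>finite (part_index K P ` e)\<close> \<open>e \<noteq> {}\<close> by simp
  ultimately show "1 < card (part_index K P ` e) \<and> card (part_index K P ` e) < card e"
    by linarith
qed

theorem mainTheorem6:
  fixes V :: "'a set" and E :: "'a set set" and r k :: nat and P :: "nat \<Rightarrow> 'a set"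
  assumes "r \<ge> 3"
    and "bi_hypergraph V E"
    and "uniform r E"
    and part_nonempty: "\<forall>i\<in>{1..k}. P i \<noteq> {}"
    and part_disjoint: "\<forall>i\<in>{1..k}. \<forall>j\<in>{1..k}. i \<noteq> j \<longrightarrow> P i \<inter> P j = {}"
    and part_cover: "(\<Union>i\<in>{1..k}. P i) = V"
    and indep: "\<forall>i\<in>{1..k}. independent E (P i)"
    and few_parts: "\<forall>e\<in>E. \<exists>I \<subseteq> {1..k}. card I < r \<and> e \<subseteq> (\<Union>i\<in>I. P i)"
  shows "colorable V E"
proof -
  have "card e = r" if "e \<in> E" for e
    using \<open>uniform r E\<close> that unfolding uniform_def by blast
  then have "\<forall>e\<in>E. e \<noteq> {} \<and> (\<exists>I \<subseteq> {1..k}. card I < card e \<and> e \<subseteq> (\<Union>i\<in>I. P i))"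
    using few_parts \<open>r \<ge> 3\<close> by (metis card.empty not_numeral_le_zero)
  then have "proper_coloring V E (part_index {1..k} P)"
    using proper_coloring_part_index[OF part_disjoint _ indep] by blast
  then show ?thesis unfolding colorable_def by blast
qed

end
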